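(* Let $n$ be a positive integer, let $x_0$ be a positive odd integer not divisible by $3$, let $m_0$ be an integer with $0 \le m_0 < 2\cdot 3^n$, and let $m$ be a nonnegative integer with $m \equiv m_0 \pmod{2\cdot 3^n}$. Suppose $x_1 = (2^{m_0}x_0-1)/3$ and $y_1 = (2^{m}x_0-1)/3$ are odd integers. Then $y_1 \equiv x_1 \pmod{2\cdot 3^n}$. *)

theory Defs
  imports "HOL-Number_Theory.Number_Theory"
begin

end

theory Submission
  imports Defs
begin

text \<open>
  Since 4 = 1 (mod 3) and cubing lifts a = 1 (mod 3^j) to a^3 = 1 (mod 3^(j+1)),
  the period of 2 modulo 3^(n+1) divides 2 * 3^n. Hence m = m0 (mod 2 * 3^n) gives
  3 y1 + 1 = 2^m x0 = 2^m0 x0 = 3 x1 + 1 modulo 3^(n+1), i.e. y1 = x1 (mod 3^n),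
  and y1 = x1 (mod 2) because both are odd.
\<close>

lemma cong_cube_one_lift:
  fixes a d :: int
  assumes "3 dvd d" and "[a = 1] (mod d)"
  shows "[a ^ 3 = 1] (mod 3 * d)"
proof -
  have "d dvd a - 1"
    using assms(2) by (simp add: cong_iff_dvd_diff)
  moreover have "3 dvd a\<^sup>2 + a + 1"
  proof -
    obtain c where "a - 1 = 3 * c"
      using assms \<open>d dvd a - 1\<close> dvd_trans by blast
    then have "a\<^sup>2 + a + 1 = 3 * (3 * c\<^sup>2 + 3 * c + 1)"
      by (simp add: eq_diff_eq power2_eq_square algebra_simps)
    then show ?thesis by simp
  qed
  ultimately have "d * 3 dvd (a - 1) * (a\<^sup>2 + a + 1)"
    by (rule mult_dvd_mono)
  moreover have "(a - 1) * (a\<^sup>2 + a + 1) = a ^ 3 - 1"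
    by (simp add: power2_eq_square power3_eq_cube algebra_simps)
  ultimately show ?thesis
    by (simp add: cong_iff_dvd_diff mult.commute)
qed

lemma cong_pow_three_pow_one:
  fixes a :: int
  assumes "[a = 1] (mod 3)"
  shows "[a ^ 3 ^ k = 1] (mod 3 ^ (k + 1))"
proof (induction k)
  case 0
  then show ?case using assms by simp
next
  case (Suc k)
  have "[(a ^ 3 ^ k) ^ 3 = 1] (mod 3 * 3 ^ (k + 1))"
    using Suc.IH by (intro cong_cube_one_lift) simp_all
  then show ?case
    by (simp add: power_mult [symmetric] mult.commute)
qed

lemma cong_pow_period:
  fixes a q :: "'a :: unique_euclidean_ring"
  assumes "[a ^ e = 1] (mod q)" and "[m = m'] (mod e)"
  shows "[a ^ m = a ^ m'] (mod q)"
proof -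
  have reduce: "[a ^ k = a ^ (k mod e)] (mod q)" for k
  proof -
    have "a ^ k = a ^ (k mod e) * (a ^ e) ^ (k div e)"
      by (metis mod_div_mult_eq power_add power_mult mult.commute)
    also have "[\<dots> = a ^ (k mod e) * 1 ^ (k div e)] (mod q)"
      using assms(1) by (intro cong_mult cong_pow) simp_all
    finally show ?thesis by simp
  qed
  show ?thesis
    using reduce [of m] reduce [of m'] assms(2)
    by (simp add: cong_def)
qed

lemma two_pow_period_mod_three_pow:
  "[(2::int) ^ (2 * 3 ^ n) = 1] (mod 3 ^ (n + 1))"
  using cong_pow_three_pow_one [of 4 n]
  by (simp add: power_mult cong_def)

theorem theorem9:
  fixes n m0 m :: nat and x0 x1 y1 :: int
  assumes "n \<ge> 1"
    and "x0 > 0" and "odd x0" and "\<not> 3 dvd x0"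
    and "m0 < 2 * 3 ^ n"
    and "[m = m0] (mod 2 * 3 ^ n)"
    and "3 * x1 = 2 ^ m0 * x0 - 1" and "odd x1"
    and "3 * y1 = 2 ^ m * x0 - 1" and "odd y1"
  shows "[y1 = x1] (mod 2 * 3 ^ n)"
proof -
  have "[(2::int) ^ m = 2 ^ m0] (mod 3 ^ (n + 1))"
    using two_pow_period_mod_three_pow assms(6) by (rule cong_pow_period)
  then have "[2 ^ m * x0 - 1 = 2 ^ m0 * x0 - 1] (mod 3 ^ (n + 1))"
    by (intro cong_diff cong_mult) simp_all
  then have "3 * 3 ^ n dvd 3 * (y1 - x1)"
    using assms(7,9) by (simp add: cong_iff_dvd_diff right_diff_distrib)
  then have mod_three_pow: "[y1 = x1] (mod 3 ^ n)"
    by (simp only: dvd_mult_cancel_left cong_iff_dvd_diff) simp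
  have mod_two: "[y1 = x1] (mod 2)"
    using assms(8,10) by (simp add: cong_def odd_iff_mod_2_eq_one)
  show ?thesis
    using mod_two mod_three_pow by (rule coprime_cong_mult) simp
qed

end
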